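(* Let $r$ be a positive integer. For Lebesgue-almost every $T\in V^+$ with $\operatorname{rank}_+(T)>r$, the problem $\min_{X\in D_r^+}\|T-X\|$ has a unique minimizer, i.e. $T$ has a unique best nonnegative rank-$r$ approximation. (Minimizers exist because $D_r^+$ is closed.)
   Context: For $i=1,\dots,d$, $V_i$ is a real vector space of dimension $n_i$ with a fixed basis; $V_i^+$ is the cone of vectors with nonnegative coordinates in that basis. $V=V_1\otimes\cdots\otimes V_d$ carries the induced basis, so tensors have coordinates $T_{i_1\dots i_d}$; $V^+$ is the set of finite sums $\sum_p u_{1,p}\otimes\cdots\otimes u_{d,p}$ with $u_{i,p}\in V_i^+$ (equivalently, tensors with all coordinates nonnegative), identified with $\mathbb{R}_+^{n_1\cdots n_d}$. The nonnegative rank $\operatorname{rank}_+(T)$ of $T\in V^+$ is the least $r$ such that $T=\sum_{p=1}^r u_{1,p}\otimes\cdots\otimes u_{d,p}$ with all $u_{i,p}\in V_i^+$. $D_r^+=\{X\in V^+:\operatorname{rank}_+(X)\le r\}$. $\|\cdot\|$ is the Hilbert–Schmidt (Euclidean, coordinate $\ell^2$) norm on $V$, with inner product $\langle\cdot,\cdot\rangle$. *)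

theory Defs
  imports "HOL-Probability.Probability"
begin

text \<open>Tensors in V = V_1 \<otimes> ... \<otimes> V_d, dim V_i = n i, are represented by their
coordinates: functions on the multi-index set idx_set d n (extensional, i.e.
elements of PiE (idx_set d n) (\<lambda>_. UNIV)).\<close>

definition idx_set :: "nat \<Rightarrow> (nat \<Rightarrow> nat) \<Rightarrow> (nat \<Rightarrow> nat) set" where
  "idx_set d n = PiE {..<d} (\<lambda>i. {..<n i})"

definition tensor_space :: "nat \<Rightarrow> (nat \<Rightarrow> nat) \<Rightarrow> ((nat \<Rightarrow> nat) \<Rightarrow> real) set" where
  "tensor_space d n = PiE (idx_set d n) (\<lambda>_. UNIV)"

definition nonneg_tensors :: "nat \<Rightarrow> (nat \<Rightarrow> nat) \<Rightarrow> ((nat \<Rightarrow> nat) \<Rightarrow> real) set" where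
  "nonneg_tensors d n = {T \<in> tensor_space d n. \<forall>\<iota>\<in>idx_set d n. T \<iota> \<ge> 0}"

text \<open>T is a sum of r outer products u_{1,p} \<otimes> ... \<otimes> u_{d,p} with nonnegative
vectors u_{i,p} (u p i j is coordinate j of u_{i,p}).\<close>
definition has_nn_decomp :: "nat \<Rightarrow> (nat \<Rightarrow> nat) \<Rightarrow> nat \<Rightarrow> ((nat \<Rightarrow> nat) \<Rightarrow> real) \<Rightarrow> bool" where
  "has_nn_decomp d n r T \<longleftrightarrow>
     (\<exists>u :: nat \<Rightarrow> nat \<Rightarrow> nat \<Rightarrow> real.
        (\<forall>p<r. \<forall>i<d. \<forall>j<n i. u p i j \<ge> 0) \<and>
        T = restrict (\<lambda>\<iota>. \<Sum>p<r. \<Prod>i<d. u p i (\<iota> i)) (idx_set d n))"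

definition nn_rank :: "nat \<Rightarrow> (nat \<Rightarrow> nat) \<Rightarrow> ((nat \<Rightarrow> nat) \<Rightarrow> real) \<Rightarrow> nat" where
  "nn_rank d n T = (LEAST r. has_nn_decomp d n r T)"

definition D_plus :: "nat \<Rightarrow> (nat \<Rightarrow> nat) \<Rightarrow> nat \<Rightarrow> ((nat \<Rightarrow> nat) \<Rightarrow> real) set" where
  "D_plus d n r = {X \<in> nonneg_tensors d n. nn_rank d n X \<le> r}"

definition hs_norm :: "nat \<Rightarrow> (nat \<Rightarrow> nat) \<Rightarrow> ((nat \<Rightarrow> nat) \<Rightarrow> real) \<Rightarrow> real" where
  "hs_norm d n X = sqrt (\<Sum>\<iota>\<in>idx_set d n. (X \<iota>)\<^sup>2)"

definition tensor_lebesgue :: "nat \<Rightarrow> (nat \<Rightarrow> nat) \<Rightarrow> ((nat \<Rightarrow> nat) \<Rightarrow> real) measure" where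
  "tensor_lebesgue d n = PiM (idx_set d n) (\<lambda>_. lborel)"

end

theory Submission
  imports Defs
begin

text \<open>
  Let \<open>D \<subseteq> \<real>\<^sup>I\<close> be any nonempty set and \<open>\<rho>\<close> the Euclidean distance to \<open>D\<close>.  Suppose \<open>T\<close>
  has two nearest points \<open>X\<^sub>1, X\<^sub>2\<close> in \<open>D\<close> with \<open>X\<^sub>1 k + e \<le> q \<le> X\<^sub>2 k - e\<close>.  Testing
  \<open>\<rho>(T + t e\<^sub>k)\<close> against \<open>X\<^sub>2\<close> for \<open>t \<ge> 0\<close> and against \<open>X\<^sub>1\<close> for \<open>t \<le> 0\<close> gives
  \<open>\<psi>(T,t) := \<rho>\<^sup>2(T + t e\<^sub>k) - \<rho>\<^sup>2(T) - t\<^sup>2 - 2t(T k - q) \<le> -2e|t|\<close>.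
  As \<open>\<psi>(T,t) + \<psi>(T + t e\<^sub>k, -t) = 0\<close>, a line parallel to the \<open>k\<close>-th axis contains at
  most one such \<open>T\<close>, so by Fubini these \<open>T\<close> form a null set.  Countably many rational
  choices of \<open>k, q, e\<close> cover every \<open>T\<close> with two nearest points.  For \<open>D = D\<^sub>r\<^sup>+\<close> a nearest
  point exists by compactness, after rescaling the factors of each rank-one term so that
  they are bounded in terms of \<open>\<parallel>T\<parallel>\<close>.
\<close>

section \<open>Nearest points in \<open>\<real>\<^sup>I\<close> are almost everywhere unique\<close>

definition l2_dist :: "'a set \<Rightarrow> ('a \<Rightarrow> real) \<Rightarrow> ('a \<Rightarrow> real) \<Rightarrow> real" where
  "l2_dist I X Y = L2_set (\<lambda>i. X i - Y i) I"

definition l2_setdist :: "'a set \<Rightarrow> ('a \<Rightarrow> real) set \<Rightarrow> ('a \<Rightarrow> real) \<Rightarrow> real" where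
  "l2_setdist I D X = (INF Y\<in>D. l2_dist I X Y)"

definition nearest :: "'a set \<Rightarrow> ('a \<Rightarrow> real) set \<Rightarrow> ('a \<Rightarrow> real) \<Rightarrow> ('a \<Rightarrow> real) \<Rightarrow> bool" where
  "nearest I D T X \<longleftrightarrow> X \<in> D \<and> (\<forall>Y\<in>D. l2_dist I T X \<le> l2_dist I T Y)"

lemma l2_dist_nonneg: "0 \<le> l2_dist I X Y"
  by (simp add: l2_dist_def)

lemma l2_dist_commute: "l2_dist I X Y = l2_dist I Y X"
  unfolding l2_dist_def L2_set_def by (simp add: power2_commute)

lemma l2_dist_triangle: "l2_dist I X Y \<le> l2_dist I X Z + l2_dist I Z Y"
proof -
  have "l2_dist I X Y = L2_set (\<lambda>i. (X i - Z i) + (Z i - Y i)) I"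
    unfolding l2_dist_def by simp
  also have "\<dots> \<le> l2_dist I X Z + l2_dist I Z Y"
    unfolding l2_dist_def by (rule L2_set_triangle_ineq)
  finally show ?thesis .
qed

lemma l2_dist_power2: "finite I \<Longrightarrow> (l2_dist I X Y)\<^sup>2 = (\<Sum>i\<in>I. (X i - Y i)\<^sup>2)"
  unfolding l2_dist_def L2_set_def by (simp add: sum_nonneg)

lemma l2_dist_fun_upd_power2:
  assumes "finite I" "k \<in> I"
  shows "(l2_dist I (X(k := X k + t)) Y)\<^sup>2 = (l2_dist I X Y)\<^sup>2 + 2*t*(X k - Y k) + t\<^sup>2"
proof -
  have "(l2_dist I (X(k := X k + t)) Y)\<^sup>2 = (X k + t - Y k)\<^sup>2 + (\<Sum>i\<in>I-{k}. (X i - Y i)\<^sup>2)"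
    unfolding l2_dist_power2[OF assms(1)] using assms
    by (simp add: sum.remove[of I k]; intro sum.cong; auto)
  moreover have "(l2_dist I X Y)\<^sup>2 = (X k - Y k)\<^sup>2 + (\<Sum>i\<in>I-{k}. (X i - Y i)\<^sup>2)"
    unfolding l2_dist_power2[OF assms(1)] using assms by (simp add: sum.remove[of I k])
  ultimately show ?thesis by (simp add: power2_eq_square algebra_simps)
qed

lemma l2_dist_fun_upd_fun_upd:
  assumes "finite I" "k \<in> I"
  shows "l2_dist I (X(k := X k + t)) (X(k := X k + s)) = \<bar>t - s\<bar>"
proof -
  have "(l2_dist I (X(k := X k + t)) (X(k := X k + s)))\<^sup>2 = (t - s)\<^sup>2"
    unfolding l2_dist_power2[OF assms(1)] using assms
    by (simp add: sum.remove[of I k]; intro sum.neutral; auto)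
  then show ?thesis using l2_dist_nonneg
    by (metis power2_abs real_sqrt_abs real_sqrt_unique)
qed

lemma l2_setdist_nonneg: "D \<noteq> {} \<Longrightarrow> 0 \<le> l2_setdist I D X"
  unfolding l2_setdist_def by (rule cINF_greatest) (auto simp: l2_dist_nonneg)

lemma bdd_below_l2_dist: "bdd_below (l2_dist I X ` D)"
  by (rule bdd_belowI[of _ 0]) (auto simp: l2_dist_nonneg)

lemma l2_setdist_le: "Y \<in> D \<Longrightarrow> l2_setdist I D X \<le> l2_dist I X Y"
  unfolding l2_setdist_def by (rule cINF_lower) (auto simp: bdd_below_l2_dist)

lemma l2_setdist_triangle:
  assumes "D \<noteq> {}"
  shows "l2_setdist I D X \<le> l2_setdist I D Z + l2_dist I X Z"
proof -
  have "l2_setdist I D X - l2_dist I X Z \<le> l2_setdist I D Z"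
    unfolding l2_setdist_def[of I D Z]
  proof (rule cINF_greatest[OF assms])
    fix Y assume "Y \<in> D"
    then have "l2_setdist I D X \<le> l2_dist I X Z + l2_dist I Z Y"
      using l2_setdist_le l2_dist_triangle order_trans by blast
    then show "l2_setdist I D X - l2_dist I X Z \<le> l2_dist I Z Y" by simp
  qed
  then show ?thesis by simp
qed

lemma l2_setdist_lipschitz:
  "D \<noteq> {} \<Longrightarrow> \<bar>l2_setdist I D X - l2_setdist I D Z\<bar> \<le> l2_dist I X Z"
  using l2_setdist_triangle[of D I X Z] l2_setdist_triangle[of D I Z X] l2_dist_commute[of I X Z]
  by linarith

lemma l2_setdist_nearest: "nearest I D T X \<Longrightarrow> l2_setdist I D T = l2_dist I T X"
  unfolding nearest_def l2_setdist_def
  by (intro antisym cINF_lower cINF_greatest bdd_below_l2_dist) auto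

definition sqdist_defect ::
    "'a set \<Rightarrow> ('a \<Rightarrow> real) set \<Rightarrow> 'a \<Rightarrow> real \<Rightarrow> ('a \<Rightarrow> real) \<Rightarrow> real \<Rightarrow> real" where
  "sqdist_defect I D k q X t =
     (l2_setdist I D (X(k := X k + t)))\<^sup>2 - (l2_setdist I D X)\<^sup>2 - t\<^sup>2 - 2*t*(X k - q)"

definition defect_set ::
    "'a set \<Rightarrow> ('a \<Rightarrow> real) set \<Rightarrow> 'a \<Rightarrow> real \<Rightarrow> real \<Rightarrow> ('a \<Rightarrow> real) set" where
  "defect_set I D k q e =
     {X \<in> PiE I (\<lambda>_. UNIV). \<forall>t. sqdist_defect I D k q X t \<le> - 2*e*\<bar>t\<bar>}"

lemma sqdist_defect_le_nearest:
  assumes "finite I" "k \<in> I" "nearest I D T X"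
  shows "sqdist_defect I D k q T t \<le> 2*t*(q - X k)"
proof -
  have "X \<in> D" using assms(3) by (simp add: nearest_def)
  then have "(l2_setdist I D (T(k := T k + t)))\<^sup>2 \<le> (l2_dist I (T(k := T k + t)) X)\<^sup>2"
    by (intro power_mono l2_setdist_le l2_setdist_nonneg) auto
  then show ?thesis
    using l2_dist_fun_upd_power2[OF assms(1,2), of T t X] l2_setdist_nearest[OF assms(3)]
    unfolding sqdist_defect_def by (simp add: algebra_simps)
qed

lemma nearest_straddle_in_defect_set:
  assumes "finite I" "k \<in> I" "T \<in> PiE I (\<lambda>_. UNIV)"
    and "nearest I D T X\<^sub>1" "nearest I D T X\<^sub>2" "X\<^sub>1 k + e \<le> q" "q \<le> X\<^sub>2 k - e"
  shows "T \<in> defect_set I D k q e"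
proof -
  have "sqdist_defect I D k q T t \<le> - 2*e*\<bar>t\<bar>" for t
  proof (cases "t \<ge> 0")
    case True
    then have "2*t*(q - X\<^sub>2 k) \<le> - 2*e*\<bar>t\<bar>"
      using assms(7) mult_left_mono[of "q + e" "X\<^sub>2 k" t] by (simp add: algebra_simps)
    then show ?thesis using sqdist_defect_le_nearest[OF assms(1,2,5), of q t] by linarith
  next
    case False
    then have "2*t*(q - X\<^sub>1 k) \<le> - 2*e*\<bar>t\<bar>"
      using assms(6) mult_left_mono_neg[of "X\<^sub>1 k + e" q t] by (simp add: algebra_simps)
    then show ?thesis using sqdist_defect_le_nearest[OF assms(1,2,4), of q t] by linarith
  qed
  then show ?thesis using assms(3) by (simp add: defect_set_def)
qed

lemma defect_set_axis_line_unique: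
  assumes "e > 0" "X(k := y\<^sub>1) \<in> defect_set I D k q e" "X(k := y\<^sub>2) \<in> defect_set I D k q e"
  shows "y\<^sub>1 = y\<^sub>2"
proof (rule ccontr)
  assume "y\<^sub>1 \<noteq> y\<^sub>2"
  let ?T\<^sub>1 = "X(k := y\<^sub>1)" and ?T\<^sub>2 = "X(k := y\<^sub>2)"
  have "sqdist_defect I D k q ?T\<^sub>1 (y\<^sub>2 - y\<^sub>1) \<le> -2*e*\<bar>y\<^sub>2 - y\<^sub>1\<bar>"
    and "sqdist_defect I D k q ?T\<^sub>2 (y\<^sub>1 - y\<^sub>2) \<le> -2*e*\<bar>y\<^sub>1 - y\<^sub>2\<bar>"
    using assms(2,3) unfolding defect_set_def by auto
  moreover have "sqdist_defect I D k q ?T\<^sub>1 (y\<^sub>2 - y\<^sub>1) + sqdist_defect I D k q ?T\<^sub>2 (y\<^sub>1 - y\<^sub>2) = 0"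
    unfolding sqdist_defect_def by (simp add: power2_eq_square algebra_simps)
  moreover have "e * \<bar>y\<^sub>2 - y\<^sub>1\<bar> > 0" using \<open>y\<^sub>1 \<noteq> y\<^sub>2\<close> assms(1) by simp
  ultimately show False by (simp add: abs_minus_commute)
qed

lemma continuous_on_sqdist_defect:
  assumes "finite I" "k \<in> I" "D \<noteq> {}"
  shows "continuous_on UNIV (sqdist_defect I D k q X)"
proof -
  have "1-lipschitz_on UNIV (\<lambda>t. l2_setdist I D (X(k := X k + t)))"
  proof (rule lipschitz_onI)
    fix t s :: real
    show "dist (l2_setdist I D (X(k := X k + t))) (l2_setdist I D (X(k := X k + s))) \<le> 1 * dist t s"
      using l2_setdist_lipschitz[OF assms(3), of I "X(k := X k + t)" "X(k := X k + s)"]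
        l2_dist_fun_upd_fun_upd[OF assms(1,2)]
      by (simp add: dist_real_def)
  qed simp
  then have "continuous_on UNIV (\<lambda>t. l2_setdist I D (X(k := X k + t)))"
    by (rule lipschitz_on_continuous_on)
  then show ?thesis unfolding sqdist_defect_def[abs_def] by (intro continuous_intros)
qed

lemma defect_set_rat:
  assumes "finite I" "k \<in> I" "D \<noteq> {}"
  shows "defect_set I D k q e =
    {X \<in> PiE I (\<lambda>_. UNIV). \<forall>t::rat. sqdist_defect I D k q X (of_rat t) \<le> - 2*e*\<bar>of_rat t\<bar>}"
proof -
  have "(\<forall>t. sqdist_defect I D k q X t \<le> - 2*e*\<bar>t\<bar>) \<longleftrightarrow>
        (\<forall>t::rat. sqdist_defect I D k q X (of_rat t) \<le> - 2*e*\<bar>of_rat t\<bar>)" for X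
  proof
    let ?S = "{t. sqdist_defect I D k q X t \<le> - 2*e*\<bar>t\<bar>}"
    assume "\<forall>t::rat. sqdist_defect I D k q X (of_rat t) \<le> - 2*e*\<bar>of_rat t\<bar>"
    then have "\<rat> \<subseteq> ?S" by (auto elim!: Rats_cases)
    moreover have "closed ?S"
      by (intro closed_Collect_le continuous_on_sqdist_defect assms continuous_intros)
    ultimately have "closure \<rat> \<subseteq> ?S" by (rule closure_minimal)
    then show "\<forall>t. sqdist_defect I D k q X t \<le> - 2*e*\<bar>t\<bar>" by (auto simp: Rats_closure_real)
  qed (metis abs_of_rat)
  then show ?thesis unfolding defect_set_def by auto
qed

lemma exists_rational_l2_dist_less:
  assumes "finite I" "e > 0"
  shows "\<exists>Z\<in>PiE I (\<lambda>_. \<rat>). l2_dist I X Z < e"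
proof -
  define e' where "e' = e / (real (card I) + 1)"
  have "e' > 0" using assms(2) by (simp add: e'_def)
  then have "\<forall>i. \<exists>z\<in>\<rat>. X i - e' < z \<and> z < X i + e'"
    using Rats_dense_in_real[of "X i - e'" "X i + e'" for i] by auto
  then obtain z where z: "\<And>i. z i \<in> \<rat>" "\<And>i. \<bar>X i - z i\<bar> \<le> e'"
    by (metis abs_diff_le_iff less_eq_real_def diff_less_eq)
  have "l2_dist I X (restrict z I) \<le> (\<Sum>i\<in>I. \<bar>X i - restrict z I i\<bar>)"
    unfolding l2_dist_def by (rule L2_set_le_sum_abs)
  also have "\<dots> \<le> real (card I) * e'"
    using sum_mono[of I "\<lambda>i. \<bar>X i - restrict z I i\<bar>" "\<lambda>_. e'"] z(2) by simp
  also have "\<dots> < e" unfolding e'_def using assms(2) by (simp add: field_simps)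
  finally show ?thesis using z(1) by (intro bexI[of _ "restrict z I"]) auto
qed

lemma l2_setdist_eq_INF_rational:
  assumes "finite I" "D \<noteq> {}"
  shows "l2_setdist I D X = (INF Z\<in>PiE I (\<lambda>_. \<rat>). l2_setdist I D Z + l2_dist I X Z)"
proof (rule antisym)
  have ne: "PiE I (\<lambda>_. \<rat>) \<noteq> {}" using Rats_0 by (auto simp: PiE_eq_empty_iff)
  show "l2_setdist I D X \<le> (INF Z\<in>PiE I (\<lambda>_. \<rat>). l2_setdist I D Z + l2_dist I X Z)"
    by (rule cINF_greatest[OF ne]) (rule l2_setdist_triangle[OF assms(2)])
  have bdd: "bdd_below ((\<lambda>Z. l2_setdist I D Z + l2_dist I X Z) ` PiE I (\<lambda>_. \<rat>))"
    by (rule bdd_belowI[of _ 0]) (auto intro!: add_nonneg_nonneg l2_setdist_nonneg[OF assms(2)] l2_dist_nonneg)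
  show "(INF Z\<in>PiE I (\<lambda>_. \<rat>). l2_setdist I D Z + l2_dist I X Z) \<le> l2_setdist I D X"
  proof (rule field_le_epsilon)
    fix e :: real assume "e > 0"
    then obtain Z where Z: "Z \<in> PiE I (\<lambda>_. \<rat>)" "l2_dist I X Z < e/2"
      using exists_rational_l2_dist_less[OF assms(1), of "e/2" X] by auto
    have "(INF Z\<in>PiE I (\<lambda>_. \<rat>). l2_setdist I D Z + l2_dist I X Z) \<le> l2_setdist I D Z + l2_dist I X Z"
      by (rule cINF_lower[OF bdd Z(1)])
    also have "\<dots> \<le> l2_setdist I D X + l2_dist I Z X + l2_dist I X Z"
      using l2_setdist_triangle[OF assms(2), of I Z X] by simp
    also have "\<dots> \<le> l2_setdist I D X + e" using Z(2) l2_dist_commute[of I Z X] by simp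
    finally show "(INF Z\<in>PiE I (\<lambda>_. \<rat>). l2_setdist I D Z + l2_dist I X Z) \<le> l2_setdist I D X + e" .
  qed
qed

lemma borel_measurable_l2_setdist:
  assumes "finite I" "D \<noteq> {}" "\<And>i. i \<in> I \<Longrightarrow> (\<lambda>x. F x i) \<in> borel_measurable M"
  shows "(\<lambda>x. l2_setdist I D (F x)) \<in> borel_measurable M"
proof -
  have "(\<lambda>x. INF Z\<in>PiE I (\<lambda>_. \<rat>). l2_setdist I D Z + l2_dist I (F x) Z) \<in> borel_measurable M"
  proof (rule borel_measurable_cINF_real)
    show "countable (PiE I (\<lambda>_. \<rat>))" by (intro countable_PiE assms(1) countable_rat)
    fix Z
    have "(\<lambda>x. \<Sum>i\<in>I. (F x i - Z i)\<^sup>2) \<in> borel_measurable M"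
      by (rule borel_measurable_sum) (use assms(3) in measurable)
    then show "(\<lambda>x. l2_setdist I D Z + l2_dist I (F x) Z) \<in> borel_measurable M"
      unfolding l2_dist_def L2_set_def by measurable
  qed
  then show ?thesis by (subst l2_setdist_eq_INF_rational[OF assms(1,2)])
qed

lemma defect_set_sets:
  assumes "finite I" "k \<in> I" "D \<noteq> {}"
  shows "defect_set I D k q e \<in> sets (PiM I (\<lambda>_. lborel))"
proof -
  let ?M = "PiM I (\<lambda>_. lborel)"
  have coord: "(\<lambda>X. X i) \<in> borel_measurable ?M" if "i \<in> I" for i
    using measurable_component_singleton[OF that, of "\<lambda>_. lborel"] by simp
  have "(\<lambda>X. sqdist_defect I D k q X t) \<in> borel_measurable ?M" for t
  proof -
    have "(\<lambda>X. l2_setdist I D (X(k := X k + t))) \<in> borel_measurable ?M"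
      by (rule borel_measurable_l2_setdist[OF assms(1,3)]) (use coord assms(2) in auto)
    moreover have "(\<lambda>X. l2_setdist I D X) \<in> borel_measurable ?M"
      using borel_measurable_l2_setdist[OF assms(1,3), where F="\<lambda>X. X"] coord by auto
    ultimately show ?thesis unfolding sqdist_defect_def using coord[OF assms(2)] by measurable
  qed
  then have "Measurable.pred ?M (\<lambda>X. \<forall>t::rat. sqdist_defect I D k q X (of_rat t) \<le> - 2*e*\<bar>of_rat t\<bar>)"
    by measurable
  then show ?thesis unfolding defect_set_rat[OF assms] by (simp add: pred_def space_PiM)
qed

lemma defect_set_null:
  assumes "finite I" "k \<in> I" "D \<noteq> {}" "e > 0"
  shows "defect_set I D k q e \<in> null_sets (PiM I (\<lambda>_. lborel))"
proof -
  interpret product_sigma_finite "\<lambda>_. lborel" by standard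
  let ?C = "defect_set I D k q e"
  have C: "?C \<in> sets (PiM I (\<lambda>_. lborel))" by (rule defect_set_sets[OF assms(1-3)])
  have section_null: "(\<integral>\<^sup>+ y. indicator ?C (X(k := y)) \<partial>lborel) = 0" for X
  proof -
    have "countable {y. X(k := y) \<in> ?C}"
    proof (cases "{y. X(k := y) \<in> ?C} = {}")
      case False
      then obtain y\<^sub>0 where "X(k := y\<^sub>0) \<in> ?C" by auto
      with defect_set_axis_line_unique[OF assms(4) this] have "{y. X(k := y) \<in> ?C} \<subseteq> {y\<^sub>0}"
        by blast
      then show ?thesis using countable_subset by blast
    qed simp
    then have "AE y in lborel. indicator ?C (X(k := y)) = (0::ennreal)"
      by (rule AE_mp[OF AE_not_in[OF countable_imp_null_set_lborel]]) (auto simp: indicator_def)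
    from nn_integral_cong_AE[OF this] show ?thesis by simp
  qed
  have "emeasure (PiM I (\<lambda>_. lborel)) ?C = (\<integral>\<^sup>+ X. indicator ?C X \<partial>PiM I (\<lambda>_. lborel))"
    using C by simp
  also have "\<dots> = (\<integral>\<^sup>+ X. (\<integral>\<^sup>+ y. indicator ?C (X(k := y)) \<partial>lborel) \<partial>PiM (I - {k}) (\<lambda>_. lborel))"
    using product_nn_integral_insert[of "I - {k}" k "indicator ?C"] assms(1,2) C
    by (simp add: insert_absorb)
  also have "\<dots> = 0" by (simp add: section_null)
  finally show ?thesis using C by auto
qed

lemma AE_nearest_unique:
  assumes "finite I" "D \<noteq> {}"
  shows "AE T in PiM I (\<lambda>_. lborel).
           \<forall>X\<^sub>1 X\<^sub>2. nearest I D T X\<^sub>1 \<longrightarrow> nearest I D T X\<^sub>2 \<longrightarrow> (\<forall>i\<in>I. X\<^sub>1 i = X\<^sub>2 i)"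
proof -
  let ?M = "PiM I (\<lambda>_. lborel)" and ?E = "{e \<in> \<rat>. e > 0}"
  have "countable ?E" by (rule countable_subset[OF _ countable_rat]) auto
  moreover have "AE T in ?M. T \<notin> defect_set I D k q e" if "k \<in> I" "e \<in> ?E" for k q e
    using that assms by (intro AE_not_in defect_set_null) auto
  ultimately have "AE T in ?M. \<forall>k\<in>I. \<forall>q\<in>\<rat>. \<forall>e\<in>?E. T \<notin> defect_set I D k q e"
    unfolding AE_ball_countable[OF countable_finite[OF assms(1)]] AE_ball_countable[OF countable_rat]
      AE_ball_countable[OF \<open>countable ?E\<close>]
    by blast
  then show ?thesis
  proof (rule AE_mp, intro AE_I2 impI allI ballI)
    fix T X\<^sub>1 X\<^sub>2 i
    assume T: "T \<in> space ?M" and no_defect: "\<forall>k\<in>I. \<forall>q\<in>\<rat>. \<forall>e\<in>?E. T \<notin> defect_set I D k q e"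
      and "nearest I D T X\<^sub>1" "nearest I D T X\<^sub>2" "i \<in> I"
    have False if "nearest I D T A" "nearest I D T B" "A i < B i" for A B
    proof -
      obtain q where q: "q \<in> \<rat>" "A i < q" "q < B i" using Rats_dense_in_real \<open>A i < B i\<close> by blast
      obtain e where e: "e \<in> \<rat>" "0 < e" "e < min (q - A i) (B i - q)"
        using Rats_dense_in_real[of 0 "min (q - A i) (B i - q)"] q by auto
      have "T \<in> defect_set I D i q e"
        using nearest_straddle_in_defect_set[OF assms(1) \<open>i \<in> I\<close> _ that(1,2)] T e
        by (simp add: space_PiM)
      then show False using no_defect \<open>i \<in> I\<close> q e by auto
    qed
    then show "X\<^sub>1 i = X\<^sub>2 i"
      using \<open>nearest I D T X\<^sub>1\<close> \<open>nearest I D T X\<^sub>2\<close> by (metis linorder_neq_iff)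
  qed
qed

section \<open>Nonnegative decompositions with bounded factors\<close>

lemma finite_idx_set: "finite (idx_set d n)"
  unfolding idx_set_def by (rule finite_PiE) auto

lemma idx_set_memD: "\<iota> \<in> idx_set d n \<Longrightarrow> i < d \<Longrightarrow> \<iota> i < n i"
  unfolding idx_set_def by auto

lemma nonneg_tensor_has_nn_decomp:
  assumes "d \<ge> 1" "X \<in> nonneg_tensors d n"
  shows "\<exists>k. has_nn_decomp d n k X"
proof -
  let ?I = "idx_set d n"
  obtain f where f: "bij_betw f {0..<card ?I} ?I"
    using ex_bij_betw_nat_finite[OF finite_idx_set] by blast
  have X: "X \<in> PiE ?I (\<lambda>_. UNIV)" "\<And>\<iota>. \<iota> \<in> ?I \<Longrightarrow> X \<iota> \<ge> 0"
    using assms(2) by (auto simp: nonneg_tensors_def tensor_space_def)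
  have fI: "f p \<in> ?I" if "p < card ?I" for p using f that by (auto simp: bij_betw_def)
  \<comment> \<open>one rank-one term per entry: the indicator of \<open>f p\<close>, scaled in the first factor\<close>
  define u where "u p i j = (if j = f p i then (if i = 0 then X (f p) else 1) else 0)" for p i j
  have u_nonneg: "\<forall>p<card ?I. \<forall>i<d. \<forall>j<n i. u p i j \<ge> 0"
    using fI X(2) by (auto simp: u_def)
  have u_term: "(\<Prod>i<d. u p i (\<iota> i)) = (if \<iota> = f p then X \<iota> else 0)"
    if p: "p < card ?I" and \<iota>: "\<iota> \<in> ?I" for p \<iota>
  proof (cases "\<iota> = f p")
    case True
    have "(\<Prod>i<d. u p i (\<iota> i)) = (\<Prod>i<d. if i = 0 then X (f p) else 1)"
      by (rule prod.cong) (auto simp: u_def True)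
    then show ?thesis using True assms(1) by (simp add: prod.delta)
  next
    case False
    then obtain i where "i < d" "\<iota> i \<noteq> f p i"
      using \<iota> fI[OF p] unfolding idx_set_def by (metis PiE_ext lessThan_iff)
    then show ?thesis using False by (auto simp: u_def intro!: prod_zero bexI[of _ i])
  qed
  have "X \<iota> = (\<Sum>p<card ?I. \<Prod>i<d. u p i (\<iota> i))" if \<iota>: "\<iota> \<in> ?I" for \<iota>
  proof -
    have "(\<Sum>p<card ?I. \<Prod>i<d. u p i (\<iota> i)) = (\<Sum>p\<in>{0..<card ?I}. (\<lambda>\<kappa>. if \<iota> = \<kappa> then X \<kappa> else 0) (f p))"
      using u_term \<iota> by (auto simp: atLeast0LessThan intro!: sum.cong)
    also have "\<dots> = (\<Sum>\<kappa>\<in>?I. if \<iota> = \<kappa> then X \<kappa> else 0)"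
      by (rule sum.reindex_bij_betw[OF f])
    finally show ?thesis using \<iota> finite_idx_set by simp
  qed
  then have "X = restrict (\<lambda>\<iota>. \<Sum>p<card ?I. \<Prod>i<d. u p i (\<iota> i)) ?I"
    by (intro PiE_ext[OF X(1)]) auto
  then show ?thesis unfolding has_nn_decomp_def using u_nonneg by blast
qed

lemma has_nn_decomp_mono:
  assumes "d \<ge> 1" "has_nn_decomp d n k X" "k \<le> r"
  shows "has_nn_decomp d n r X"
proof -
  obtain u where u: "\<forall>p<k. \<forall>i<d. \<forall>j<n i. u p i j \<ge> 0"
    and X: "X = restrict (\<lambda>\<iota>. \<Sum>p<k. \<Prod>i<d. u p i (\<iota> i)) (idx_set d n)"
    using assms(2) unfolding has_nn_decomp_def by blast
  define u' where "u' p = (if p < k then u p else (\<lambda>i j. 0))" for p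
  have "(\<Sum>p<r. \<Prod>i<d. u' p i (\<iota> i)) = (\<Sum>p<k. \<Prod>i<d. u p i (\<iota> i))" for \<iota>
    using assms(1,3) by (subst sum.mono_neutral_right[of "{..<r}" "{..<k}"]) (auto simp: u'_def)
  then have "X = restrict (\<lambda>\<iota>. \<Sum>p<r. \<Prod>i<d. u' p i (\<iota> i)) (idx_set d n)"
    by (simp add: X)
  moreover have "\<forall>p<r. \<forall>i<d. \<forall>j<n i. u' p i j \<ge> 0" using u by (simp add: u'_def)
  ultimately show ?thesis unfolding has_nn_decomp_def by blast
qed

lemma zero_tensor_in_D_plus: "restrict (\<lambda>_. 0) (idx_set d n) \<in> D_plus d n r"
proof -
  have "has_nn_decomp d n 0 (restrict (\<lambda>_. 0) (idx_set d n))"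
    unfolding has_nn_decomp_def by simp
  then have "nn_rank d n (restrict (\<lambda>_. 0) (idx_set d n)) \<le> r"
    unfolding nn_rank_def by (metis Least_le le0 le_trans)
  then show ?thesis unfolding D_plus_def nonneg_tensors_def tensor_space_def by auto
qed

lemma D_plus_has_nn_decomp:
  assumes "d \<ge> 1" "Y \<in> D_plus d n r"
  shows "has_nn_decomp d n r Y"
proof -
  have "has_nn_decomp d n (nn_rank d n Y) Y" unfolding nn_rank_def
    using nonneg_tensor_has_nn_decomp[OF assms(1)] assms(2) by (auto simp: D_plus_def intro: LeastI_ex)
  then show ?thesis using has_nn_decomp_mono assms by (auto simp: D_plus_def)
qed

lemma rank_one_rescale:
  assumes "d \<ge> 1" "B \<ge> 0" "\<forall>i<d. \<forall>j<n i. 0 \<le> a i j"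
    and bound: "\<forall>\<iota>\<in>idx_set d n. (\<Prod>i<d. a i (\<iota> i)) \<le> B"
  shows "\<exists>b. (\<forall>i j. 0 \<le> b i j \<and> b i j \<le> root d B) \<and>
             (\<forall>\<iota>\<in>idx_set d n. (\<Prod>i<d. b i (\<iota> i)) = (\<Prod>i<d. a i (\<iota> i)))"
proof (cases "\<exists>i<d. \<forall>j<n i. a i j = 0")
  case True
  then obtain i\<^sub>0 where i\<^sub>0: "i\<^sub>0 < d" "\<forall>j<n i\<^sub>0. a i\<^sub>0 j = 0" by blast
  have vanish: "(\<Prod>i<d. a i (\<iota> i)) = (\<Prod>i<d. 0)" if "\<iota> \<in> idx_set d n" for \<iota>
  proof -
    have "(\<Prod>i<d. a i (\<iota> i)) = 0"
      using i\<^sub>0 idx_set_memD[OF that] by (intro prod_zero) (auto intro!: bexI[of _ i\<^sub>0])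
    then show ?thesis using assms(1) by (simp add: power_0_left)
  qed
  show ?thesis using assms(2)
    by (intro exI[of _ "\<lambda>_ _. 0"]) (simp add: real_root_ge_zero vanish)
next
  case False
  define m where "m i = Max (a i ` {..<n i})" for i
  have a_le_m: "a i j \<le> m i" if "i < d" "j < n i" for i j
    unfolding m_def using that by (intro Max_ge) auto
  have "\<exists>j<n i. a i j = m i" if "i < d" for i
  proof -
    have "{..<n i} \<noteq> {}" using False that by auto
    then have "m i \<in> a i ` {..<n i}" unfolding m_def by (intro Max_in) auto
    then show ?thesis by auto
  qed
  then obtain js where js: "\<And>i. i < d \<Longrightarrow> js i < n i \<and> a i (js i) = m i" by metis
  have m_pos: "m i > 0" if "i < d" for i
  proof -
    obtain j where "j < n i" "a i j \<noteq> 0" using False \<open>i < d\<close> by blast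
    then have "0 < a i j" using assms(3) \<open>i < d\<close> by force
    then show ?thesis using a_le_m[OF \<open>i < d\<close> \<open>j < n i\<close>] by linarith
  qed
  define P where "P = (\<Prod>i<d. m i)"
  have "P > 0" unfolding P_def using m_pos by (intro prod_pos) auto
  have "restrict js {..<d} \<in> idx_set d n" unfolding idx_set_def using js by auto
  moreover have "(\<Prod>i<d. a i (restrict js {..<d} i)) = P"
    unfolding P_def using js by (intro prod.cong) auto
  ultimately have "P \<le> B" using bound by metis
  \<comment> \<open>rescale factor \<open>i\<close> by \<open>c / m i\<close>, where \<open>c\<^sup>d = P\<close>, so that all maxima become \<open>c\<close>\<close>
  define c where "c = root d P"
  have c: "c \<ge> 0" "c ^ d = P" "c \<le> root d B"
    unfolding c_def using \<open>P > 0\<close> \<open>P \<le> B\<close> assms(1) by (auto simp: real_root_pow_pos2)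
  define b where "b i j = (if i < d \<and> j < n i then a i j * (c / m i) else 0)" for i j
  have "0 \<le> b i j \<and> b i j \<le> root d B" for i j
  proof (cases "i < d \<and> j < n i")
    case True
    then have "a i j * (c / m i) \<le> m i * (c / m i)"
      using a_le_m c(1) m_pos[of i] by (intro mult_right_mono) auto
    then show ?thesis using True assms(3) c m_pos[of i] unfolding b_def by auto
  qed (use assms(2) in \<open>auto simp: b_def real_root_ge_zero\<close>)
  moreover have "(\<Prod>i<d. b i (\<iota> i)) = (\<Prod>i<d. a i (\<iota> i))" if "\<iota> \<in> idx_set d n" for \<iota>
  proof -
    have "(\<Prod>i<d. b i (\<iota> i)) = (\<Prod>i<d. a i (\<iota> i)) * (\<Prod>i<d. c / m i)"
      unfolding b_def prod.distrib[symmetric] using idx_set_memD[OF that] by (intro prod.cong) auto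
    also have "(\<Prod>i<d. c / m i) = 1" using c(2) \<open>P > 0\<close>
      by (simp add: prod_dividef P_def) (use m_pos in fastforce)
    finally show ?thesis by simp
  qed
  ultimately show ?thesis by blast
qed

definition factor_tensor ::
    "nat \<Rightarrow> (nat \<Rightarrow> nat) \<Rightarrow> nat \<Rightarrow> (nat \<times> nat \<times> nat \<Rightarrow> real) \<Rightarrow> (nat \<Rightarrow> nat) \<Rightarrow> real" where
  "factor_tensor d n r v = restrict (\<lambda>\<iota>. \<Sum>p<r. \<Prod>i<d. v (p, i, \<iota> i)) (idx_set d n)"

lemma factor_tensor_in_D_plus:
  assumes "\<And>x. v x \<ge> 0"
  shows "factor_tensor d n r v \<in> D_plus d n r"
proof -
  have "has_nn_decomp d n r (factor_tensor d n r v)"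
    unfolding has_nn_decomp_def factor_tensor_def using assms
    by (intro exI[of _ "\<lambda>p i j. v (p, i, j)"]) auto
  then have "nn_rank d n (factor_tensor d n r v) \<le> r" unfolding nn_rank_def by (rule Least_le)
  moreover have "factor_tensor d n r v \<in> nonneg_tensors d n"
    unfolding nonneg_tensors_def tensor_space_def factor_tensor_def using assms
    by (auto intro!: sum_nonneg prod_nonneg)
  ultimately show ?thesis unfolding D_plus_def by auto
qed

lemma D_plus_bounded_factors:
  assumes "d \<ge> 1" "Y \<in> D_plus d n r" "B \<ge> 0" "\<forall>\<iota>\<in>idx_set d n. Y \<iota> \<le> B"
  shows "\<exists>v. (\<forall>x. 0 \<le> v x \<and> v x \<le> root d B) \<and> Y = factor_tensor d n r v"
proof -
  obtain u where u: "\<forall>p<r. \<forall>i<d. \<forall>j<n i. u p i j \<ge> 0"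
    and Y: "Y = restrict (\<lambda>\<iota>. \<Sum>p<r. \<Prod>i<d. u p i (\<iota> i)) (idx_set d n)"
    using D_plus_has_nn_decomp[OF assms(1,2)] unfolding has_nn_decomp_def by blast
  have "\<exists>b. (\<forall>i j. 0 \<le> b i j \<and> b i j \<le> root d B) \<and>
            (\<forall>\<iota>\<in>idx_set d n. (\<Prod>i<d. b i (\<iota> i)) = (\<Prod>i<d. u p i (\<iota> i)))" if "p < r" for p
  proof (rule rank_one_rescale[OF assms(1,3)])
    show "\<forall>i<d. \<forall>j<n i. 0 \<le> u p i j" using u that by blast
    show "\<forall>\<iota>\<in>idx_set d n. (\<Prod>i<d. u p i (\<iota> i)) \<le> B"
    proof
      fix \<iota> assume \<iota>: "\<iota> \<in> idx_set d n"
      have "(\<Prod>i<d. u p i (\<iota> i)) \<le> (\<Sum>p<r. \<Prod>i<d. u p i (\<iota> i))"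
        using that u idx_set_memD[OF \<iota>] by (intro member_le_sum prod_nonneg) auto
      also have "\<dots> = Y \<iota>" using \<iota> Y by simp
      finally show "(\<Prod>i<d. u p i (\<iota> i)) \<le> B" using assms(4) \<iota> by fastforce
    qed
  qed
  then obtain b where b: "\<And>p i j. p < r \<Longrightarrow> 0 \<le> b p i j \<and> b p i j \<le> root d B"
    "\<And>p \<iota>. p < r \<Longrightarrow> \<iota> \<in> idx_set d n \<Longrightarrow> (\<Prod>i<d. b p i (\<iota> i)) = (\<Prod>i<d. u p i (\<iota> i))"
    by metis
  define v where "v = (\<lambda>(p, i, j). if p < r then b p i j else 0)"
  have "0 \<le> v x \<and> v x \<le> root d B" for x
    using b(1) assms(3) by (auto simp: v_def real_root_ge_zero split: prod.split)
  moreover have "Y = factor_tensor d n r v"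
    unfolding Y factor_tensor_def v_def using b(2) by (intro restrict_ext sum.cong) auto
  ultimately show ?thesis by blast
qed

section \<open>Existence of best nonnegative approximations\<close>

lemma compact_PiE_UNIV:
  fixes S :: "'a \<Rightarrow> 'b::topological_space set"
  assumes "\<And>i. compact (S i)"
  shows "compact (PiE UNIV S)"
  using assms compactin_PiE[of "\<lambda>_. euclidean" UNIV S] by (simp add: euclidean_product_topology)

lemma continuous_on_coordinate [continuous_intros]:
  "continuous_on S (\<lambda>v. v x :: 'b::topological_space)"
  by (rule continuous_on_subset[OF continuous_on_product_coordinates]) simp

lemma nearest_exists_of_compact_param:
  fixes f :: "'b::topological_space \<Rightarrow> 'a \<Rightarrow> real"
  assumes "compact K" "continuous_on K (\<lambda>v. l2_dist I T (f v))" "f ` K \<subseteq> D" "v\<^sub>0 \<in> K"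
    and param: "\<And>Y. Y \<in> D \<Longrightarrow> l2_dist I T Y \<le> l2_dist I T (f v\<^sub>0) \<Longrightarrow> Y \<in> f ` K"
  shows "\<exists>X. nearest I D T X"
proof -
  obtain v where v: "v \<in> K" "\<And>w. w \<in> K \<Longrightarrow> l2_dist I T (f v) \<le> l2_dist I T (f w)"
    using continuous_attains_inf[OF assms(1) _ assms(2)] assms(4) by blast
  have "l2_dist I T (f v) \<le> l2_dist I T Y" if "Y \<in> D" for Y
  proof (cases "l2_dist I T Y \<le> l2_dist I T (f v\<^sub>0)")
    case True
    then show ?thesis using param[OF that] v(2) by blast
  next
    case False
    then show ?thesis using v(2)[OF assms(4)] by linarith
  qed
  then show ?thesis using v(1) assms(3) unfolding nearest_def by blast
qed

lemma nearest_exists_finite: "finite D \<Longrightarrow> D \<noteq> {} \<Longrightarrow> \<exists>X. nearest I D T X"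
  using ex_is_arg_min_if_finite[of D "l2_dist I T"] by (auto simp: is_arg_min_linorder nearest_def)

lemma D_plus_nearest_exists:
  assumes "d \<ge> 1"
  shows "\<exists>X. nearest (idx_set d n) (D_plus d n r) T X"
proof -
  let ?I = "idx_set d n"
  define L where "L = L2_set T ?I"
  define K where "K = PiE UNIV (\<lambda>_::nat \<times> nat \<times> nat. {0..root d (2 * L)})"
  have "L \<ge> 0" unfolding L_def by simp
  then have "(\<lambda>_. 0) \<in> K" unfolding K_def by (auto simp: real_root_ge_zero)
  have dist_eq: "l2_dist ?I T (factor_tensor d n r v)
                   = sqrt (\<Sum>\<iota>\<in>?I. (T \<iota> - (\<Sum>p<r. \<Prod>i<d. v (p, i, \<iota> i)))\<^sup>2)" for v
    unfolding l2_dist_def L2_set_def factor_tensor_def by (intro arg_cong[where f=sqrt] sum.cong) auto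
  have "l2_dist ?I T (factor_tensor d n r (\<lambda>_. 0)) = L"
    unfolding dist_eq L_def L2_set_def using assms by (simp add: power_0_left)
  show ?thesis
  proof (rule nearest_exists_of_compact_param[OF _ _ _ \<open>(\<lambda>_. 0) \<in> K\<close>])
    show "compact K" unfolding K_def by (rule compact_PiE_UNIV) simp
    show "continuous_on K (\<lambda>v. l2_dist ?I T (factor_tensor d n r v))"
      unfolding dist_eq by (intro continuous_intros)
    show "factor_tensor d n r ` K \<subseteq> D_plus d n r"
      by (auto simp: K_def intro!: factor_tensor_in_D_plus)
    fix Y assume Y: "Y \<in> D_plus d n r"
      and close: "l2_dist ?I T Y \<le> l2_dist ?I T (factor_tensor d n r (\<lambda>_. 0))"
    have "Y \<iota> \<le> 2 * L" if \<iota>: "\<iota> \<in> ?I" for \<iota>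
    proof -
      have "Y \<iota> \<le> L2_set (\<lambda>\<kappa>. (Y \<kappa> - T \<kappa>) + T \<kappa>) ?I"
        using member_le_L2_set[OF finite_idx_set \<iota>, of Y] by simp
      also have "\<dots> \<le> l2_dist ?I Y T + L"
        unfolding l2_dist_def L_def by (rule L2_set_triangle_ineq)
      finally show ?thesis
        using close l2_dist_commute[of ?I Y T] \<open>l2_dist ?I T (factor_tensor d n r (\<lambda>_. 0)) = L\<close> by simp
    qed
    then have "\<forall>\<iota>\<in>?I. Y \<iota> \<le> 2 * L" by blast
    moreover have "2 * L \<ge> 0" using \<open>L \<ge> 0\<close> by simp
    ultimately obtain v where "\<forall>x. 0 \<le> v x \<and> v x \<le> root d (2 * L)" "Y = factor_tensor d n r v"
      using D_plus_bounded_factors[OF assms Y] by blast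
    then show "Y \<in> factor_tensor d n r ` K" unfolding K_def by auto
  qed
qed

section \<open>Tensors of order zero\<close>

text \<open>
  For \<open>d = 0\<close> a tensor is a single real number \<open>X (\<lambda>_. undefined)\<close>, and its "rank" is that
  number when it is a natural number and the junk value \<open>LEAST k. False\<close> otherwise.
\<close>

lemma idx_set_0: "idx_set 0 n = {\<lambda>_. undefined}"
  unfolding idx_set_def by simp

lemma tensor_space_0_eq:
  "X \<in> tensor_space 0 n \<Longrightarrow> X = restrict (\<lambda>_. X (\<lambda>_. undefined)) (idx_set 0 n)"
  unfolding tensor_space_def idx_set_0 by (rule PiE_ext) auto

lemma has_nn_decomp_0_iff: "has_nn_decomp 0 n k X \<longleftrightarrow> X = restrict (\<lambda>_. real k) (idx_set 0 n)"
  unfolding has_nn_decomp_def by simp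

lemma nn_rank_0_of_nat:
  assumes "X \<in> tensor_space 0 n" "X (\<lambda>_. undefined) = real k"
  shows "nn_rank 0 n X = k"
  unfolding nn_rank_def
proof (rule Least_equality)
  show "has_nn_decomp 0 n k X"
    unfolding has_nn_decomp_0_iff using tensor_space_0_eq[OF assms(1)] assms(2) by simp
  show "k \<le> m" if "has_nn_decomp 0 n m X" for m
    using that assms(2) unfolding has_nn_decomp_0_iff idx_set_0 by simp
qed

lemma nn_rank_0_not_nat:
  assumes "\<forall>k::nat. X (\<lambda>_. undefined) \<noteq> real k"
  shows "nn_rank 0 n X = (LEAST k::nat. False)"
proof -
  have "(\<lambda>k. has_nn_decomp 0 n k X) = (\<lambda>k. False)"
    using assms unfolding has_nn_decomp_0_iff idx_set_0 by (auto simp: fun_eq_iff)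
  then show ?thesis unfolding nn_rank_def by simp
qed

lemma AE_tensor_0_not_nat: "AE T in tensor_lebesgue 0 n. \<forall>k::nat. T (\<lambda>_. undefined) \<noteq> real k"
proof -
  let ?I = "idx_set 0 n"
  interpret product_sigma_finite "\<lambda>_. lborel" by standard
  have "AE T in PiM ?I (\<lambda>_. lborel). T (\<lambda>_. undefined) \<noteq> real k" for k :: nat
  proof (rule AE_I')
    let ?N = "PiE ?I (\<lambda>_. {real k})"
    have "emeasure (PiM ?I (\<lambda>_. lborel)) ?N = (\<Prod>i\<in>?I. emeasure lborel {real k})"
      by (rule emeasure_PiM) (auto simp: idx_set_0)
    then have "emeasure (PiM ?I (\<lambda>_. lborel)) ?N = 0" by (simp add: idx_set_0)
    moreover have "?N \<in> sets (PiM ?I (\<lambda>_. lborel))"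
      by (rule sets_PiM_I_finite) (auto simp: idx_set_0)
    ultimately show "?N \<in> null_sets (PiM ?I (\<lambda>_. lborel))" by (rule null_setsI)
    show "{T \<in> space (PiM ?I (\<lambda>_. lborel)). \<not> T (\<lambda>_. undefined) \<noteq> real k} \<subseteq> ?N"
    proof
      fix T assume "T \<in> {T \<in> space (PiM ?I (\<lambda>_. lborel)). \<not> T (\<lambda>_. undefined) \<noteq> real k}"
      then have "T \<in> tensor_space 0 n" "T (\<lambda>_. undefined) = real k"
        by (auto simp: space_PiM tensor_space_def)
      then have "T = restrict (\<lambda>_. real k) ?I" using tensor_space_0_eq by metis
      then show "T \<in> ?N" by simp
    qed
  qed
  then show ?thesis unfolding tensor_lebesgue_def by (simp add: AE_all_countable)
qed

lemma finite_D_plus_0: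
  assumes "r < (LEAST k::nat. False)"
  shows "finite (D_plus 0 n r)"
proof (rule finite_subset)
  show "D_plus 0 n r \<subseteq> (\<lambda>k. restrict (\<lambda>_. real k) (idx_set 0 n)) ` {..r}"
  proof
    fix X assume X: "X \<in> D_plus 0 n r"
    then have "X \<in> tensor_space 0 n" "nn_rank 0 n X \<le> r"
      by (auto simp: D_plus_def nonneg_tensors_def)
    moreover obtain k where k: "X (\<lambda>_. undefined) = real k"
      using nn_rank_0_not_nat[of X n] assms \<open>nn_rank 0 n X \<le> r\<close> by auto
    ultimately have "k \<le> r" "X = restrict (\<lambda>_. real k) (idx_set 0 n)"
      using nn_rank_0_of_nat[of X n k] tensor_space_0_eq[of X n] by auto
    then show "X \<in> (\<lambda>k. restrict (\<lambda>_. real k) (idx_set 0 n)) ` {..r}" by auto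
  qed
qed simp

lemma AE_D_plus_0_nearest_exists:
  "AE T in tensor_lebesgue 0 n. T \<in> nonneg_tensors 0 n \<and> nn_rank 0 n T > r \<longrightarrow>
     (\<exists>X. nearest (idx_set 0 n) (D_plus 0 n r) T X)"
proof (cases "r < (LEAST k::nat. False)")
  case True
  then have "\<exists>X. nearest (idx_set 0 n) (D_plus 0 n r) T X" for T
    using nearest_exists_finite[OF finite_D_plus_0] zero_tensor_in_D_plus by blast
  then show ?thesis by simp
next
  case False
  \<comment> \<open>then a tensor of rank \<open>> r\<close> is a natural number, which happens only on a null set\<close>
  show ?thesis using AE_tensor_0_not_nat
    by eventually_elim (use False nn_rank_0_not_nat in auto)
qed

lemma AE_D_plus_nearest_exists:
  "AE T in tensor_lebesgue d n. T \<in> nonneg_tensors d n \<and> nn_rank d n T > r \<longrightarrow>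
     (\<exists>X. nearest (idx_set d n) (D_plus d n r) T X)"
proof (cases "d = 0")
  case True
  show ?thesis using AE_D_plus_0_nearest_exists[of n r] unfolding True .
qed (use D_plus_nearest_exists in auto)

theorem mainTheorem1:
  fixes d r :: nat and n :: "nat \<Rightarrow> nat"
  assumes "r > 0"
  shows "AE T in tensor_lebesgue d n.
           (T \<in> nonneg_tensors d n \<and> nn_rank d n T > r) \<longrightarrow>
           (\<exists>!X. X \<in> D_plus d n r \<and>
                 (\<forall>Y \<in> D_plus d n r. hs_norm d n (T - X) \<le> hs_norm d n (T - Y)))"
proof -
  let ?I = "idx_set d n" and ?D = "D_plus d n r"
  have "?D \<noteq> {}" using zero_tensor_in_D_plus by blast
  have nearest_iff: "X \<in> ?D \<and> (\<forall>Y \<in> ?D. hs_norm d n (T - X) \<le> hs_norm d n (T - Y)) \<longleftrightarrow>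
                     nearest ?I ?D T X" for T X
    by (simp add: nearest_def hs_norm_def l2_dist_def L2_set_def)
  have nearest_eqI: "X\<^sub>1 = X\<^sub>2" if "nearest ?I ?D T X\<^sub>1" "nearest ?I ?D T X\<^sub>2" "\<forall>i\<in>?I. X\<^sub>1 i = X\<^sub>2 i"
    for T X\<^sub>1 X\<^sub>2
    using that by (auto simp: nearest_def D_plus_def nonneg_tensors_def tensor_space_def intro: PiE_ext)
  show ?thesis
    using AE_nearest_unique[OF finite_idx_set \<open>?D \<noteq> {}\<close>] AE_D_plus_nearest_exists[of d n r]
    unfolding tensor_lebesgue_def nearest_iff
  proof eventually_elim
    case (elim T)
    show ?case
    proof
      assume "T \<in> nonneg_tensors d n \<and> nn_rank d n T > r"
      then obtain X where "nearest ?I ?D T X" using elim(2) by blast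
      then show "\<exists>!X. nearest ?I ?D T X" using elim(1) nearest_eqI by blast
    qed
  qed
qed

end
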